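(* There is an absolute constant $C>0$ such that the following holds. Let $B=(U\cup V,E)$ be a bipartite graph with $n\ge2$ nodes in which every node of $U$ has degree at least $d$ and every node of $V$ has degree at most $f<d$. Let $M$ be any matching of $B$ and let $s\in U$ be a node not matched by $M$. Then there is an augmenting path for $M$ starting at $s$ of length at most $C\,d\log n$.
   Context: An augmenting path for a matching $M$ is a path whose edges alternate between edges not in $M$ and edges in $M$, and whose two endpoints are both unmatched by $M$ (so it starts and ends with non-$M$ edges). *)

theory Defs
  imports Complex_Main
begin

definition bipartite_graph :: "nat set \<Rightarrow> nat set \<Rightarrow> (nat \<times> nat) set \<Rightarrow> bool" where
  "bipartite_graph U V E \<longleftrightarrow> finite U \<and> finite V \<and> U \<inter> V = {} \<and> E \<subseteq> U \<times> V"

definition degree :: "(nat \<times> nat) set \<Rightarrow> nat \<Rightarrow> nat" where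
  "degree E x = card {y. (x, y) \<in> E \<or> (y, x) \<in> E}"

definition matching :: "(nat \<times> nat) set \<Rightarrow> (nat \<times> nat) set \<Rightarrow> bool" where
  "matching E M \<longleftrightarrow> M \<subseteq> E \<and>
     (\<forall>e1\<in>M. \<forall>e2\<in>M. e1 \<noteq> e2 \<longrightarrow>
        fst e1 \<noteq> fst e2 \<and> snd e1 \<noteq> snd e2 \<and> fst e1 \<noteq> snd e2 \<and> snd e1 \<noteq> fst e2)"

definition matched :: "(nat \<times> nat) set \<Rightarrow> nat \<Rightarrow> bool" where
  "matched M x \<longleftrightarrow> (\<exists>e\<in>M. fst e = x \<or> snd e = x)"

definition has_edge :: "(nat \<times> nat) set \<Rightarrow> nat \<Rightarrow> nat \<Rightarrow> bool" where
  "has_edge E a b \<longleftrightarrow> (a, b) \<in> E \<or> (b, a) \<in> E"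

definition augmenting_path :: "(nat \<times> nat) set \<Rightarrow> (nat \<times> nat) set \<Rightarrow> nat list \<Rightarrow> bool" where
  "augmenting_path E M p \<longleftrightarrow>
     length p \<ge> 2 \<and> distinct p \<and>
     (\<forall>i < length p - 1. has_edge E (p ! i) (p ! Suc i)) \<and>
     (\<forall>i < length p - 1. has_edge M (p ! i) (p ! Suc i) \<longleftrightarrow> odd i) \<and>
     \<not> matched M (hd p) \<and> \<not> matched M (last p)"

end

theory Submission
  imports Defs
begin

text \<open>Grow the alternating search tree from \<open>s\<close> layer by layer: layer \<open>k\<close> consists
  of the nodes of \<open>U\<close> reachable from \<open>s\<close> by an alternating path with at most \<open>k\<close>
  matched edges.  As long as no node of layer \<open>k\<close> has an unmatched neighbour, every
  neighbour of the layer is matched into layer \<open>k + 1\<close>; counting the edges between the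
  layer and its neighbours, layer \<open>k + 1\<close> is at least \<open>d / f\<close> times larger.  Hence
  after at most \<open>ln n / ln (d / f) \<le> d ln n\<close> layers an unmatched neighbour appears,
  which closes an augmenting path of length at most \<open>2 d ln n + 1\<close>.  The path is simple
  because its \<open>i\<close>-th node of \<open>U\<close> has depth exactly \<open>i\<close> in the search tree.\<close>

lemma exponent_le_of_power_bound:
  fixes d f k :: nat and x :: real
  assumes "f < d" and bound: "real d ^ k \<le> x * real f ^ k"
  shows "real k \<le> real d * ln x"
proof (cases "f = 0")
  case True
  have "k = 0"
  proof (rule ccontr)
    assume "k \<noteq> 0"
    with True bound have "real d ^ k \<le> 0" by (simp add: power_0_left)
    moreover have "0 < real d ^ k" using \<open>f < d\<close> by simp
    ultimately show False by linarith
  qed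
  with bound show ?thesis by simp
next
  case False
  then have f: "real f > 0" and fd: "real f < real d" using \<open>f < d\<close> by auto
  have "(real d / real f) ^ k \<le> x"
    using bound f by (simp add: power_divide divide_le_eq)
  then have "ln ((real d / real f) ^ k) \<le> ln x"
    using f fd by (intro ln_mono) auto
  then have "real k * (ln (real d) - ln (real f)) \<le> ln x"
    using f fd by (simp add: ln_realpow ln_div)
  moreover have "1 / real d \<le> ln (real d) - ln (real f)"
  proof -
    have "ln (real f) - ln (real d) \<le> (real f - real d) / real d"
      using f fd by (intro ln_diff_le) auto
    moreover have "(real f - real d) / real d \<le> - 1 / real d"
      using fd \<open>f < d\<close> by (intro divide_right_mono) auto
    ultimately show ?thesis by simp
  qed
  ultimately have "real k * (1 / real d) \<le> ln x"
    by (meson mult_left_mono of_nat_0_le_iff order_trans)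
  then show ?thesis using fd f by (simp add: field_simps)
qed

lemma two_d_ln_plus_one_le:
  fixes d :: nat and m n :: real
  assumes "1 \<le> d" and "0 < m" and "m \<le> n" and "2 \<le> n"
  shows "2 * real d * ln m + 1 \<le> 4 * real d * ln n"
proof -
  have "real d * ln m \<le> real d * ln n"
    using assms by (intro mult_left_mono) auto
  moreover have "1 * (1 / 2) \<le> real d * ln n"
  proof (rule mult_mono)
    have "1 / 2 \<le> ln (2::real)" using ln_add1_ge[of 1] by simp
    also have "\<dots> \<le> ln n" using assms by simp
    finally show "1 / 2 \<le> ln n" .
  qed (use assms in auto)
  ultimately show ?thesis by linarith
qed

lemma sum_card_relation_swap:
  assumes "finite A" "finite B"
  shows "(\<Sum>a\<in>A. card {b\<in>B. (a, b) \<in> R}) = (\<Sum>b\<in>B. card {a\<in>A. (a, b) \<in> R})"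
proof -
  have "(\<Sum>a\<in>A. card {b\<in>B. (a, b) \<in> R}) = (\<Sum>a\<in>A. \<Sum>b\<in>B. of_bool ((a, b) \<in> R))"
    using assms by (simp add: Int_def)
  also have "\<dots> = (\<Sum>b\<in>B. \<Sum>a\<in>A. of_bool ((a, b) \<in> R))"
    by (rule sum.swap)
  also have "\<dots> = (\<Sum>b\<in>B. card {a\<in>A. (a, b) \<in> R})"
    using assms by (simp add: Int_def)
  finally show ?thesis .
qed

lemma matching_inj_on_fst: "matching E M \<Longrightarrow> inj_on fst M"
  and matching_inj_on_snd: "matching E M \<Longrightarrow> inj_on snd M"
  unfolding matching_def inj_on_def by blast+

lemma bipartite_degree_U:
  assumes "bipartite_graph U V E" and "u \<in> U"
  shows "degree E u = card {v. (u, v) \<in> E}"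
proof -
  have "{y. (u, y) \<in> E \<or> (y, u) \<in> E} = {v. (u, v) \<in> E}"
    using assms by (auto simp: bipartite_graph_def)
  then show ?thesis by (simp add: degree_def)
qed

lemma bipartite_degree_V:
  assumes "bipartite_graph U V E" and "v \<in> V"
  shows "degree E v = card {u. (u, v) \<in> E}"
proof -
  have "{y. (v, y) \<in> E \<or> (y, v) \<in> E} = {u. (u, v) \<in> E}"
    using assms by (auto simp: bipartite_graph_def)
  then show ?thesis by (simp add: degree_def)
qed

lemma bipartite_matched_V:
  "bipartite_graph U V E \<Longrightarrow> matching E M \<Longrightarrow> v \<in> V \<Longrightarrow> matched M v \<longleftrightarrow> (\<exists>u. (u, v) \<in> M)"
  unfolding bipartite_graph_def matching_def matched_def by force

definition interleave :: "(nat \<Rightarrow> 'a) \<Rightarrow> (nat \<Rightarrow> 'a) \<Rightarrow> nat \<Rightarrow> 'a list" where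
  "interleave us vs m = map (\<lambda>j. if even j then us (j div 2) else vs (j div 2)) [0..<2 * m + 2]"

lemma length_interleave [simp]: "length (interleave us vs m) = 2 * m + 2"
  by (simp add: interleave_def)

lemma hd_interleave [simp]: "hd (interleave us vs m) = us 0"
  by (simp add: interleave_def hd_map del: upt_Suc)

lemma nth_interleave:
  "j < 2 * m + 2 \<Longrightarrow> interleave us vs m ! j = (if even j then us (j div 2) else vs (j div 2))"
  by (simp add: interleave_def del: upt_Suc)

lemma distinct_interleave:
  assumes us: "inj_on us {..m}" and vs: "inj_on vs {..m}"
    and disjoint: "us ` {..m} \<inter> vs ` {..m} = {}"
  shows "distinct (interleave us vs m)"
proof -
  have "inj_on (\<lambda>j. if even j then us (j div 2) else vs (j div 2)) {0..<2 * m + 2}"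
  proof (rule inj_onI)
    fix i j assume ij: "i \<in> {0..<2 * m + 2}" "j \<in> {0..<2 * m + 2}"
      and eq: "(if even i then us (i div 2) else vs (i div 2)) =
        (if even j then us (j div 2) else vs (j div 2))"
    have le: "i div 2 \<in> {..m}" "j div 2 \<in> {..m}" using ij by auto
    consider "even i" "even j" | "odd i" "odd j" | "even i \<noteq> even j" by blast
    then show "i = j"
    proof cases
      case 1
      then have "us (i div 2) = us (j div 2)" using eq by simp
      from us this le have "i div 2 = j div 2" by (rule inj_onD)
      with 1 show ?thesis by (metis even_two_times_div_two)
    next
      case 2
      then have "vs (i div 2) = vs (j div 2)" using eq by simp
      from vs this le have "i div 2 = j div 2" by (rule inj_onD)
      with 2 show ?thesis by (metis odd_two_times_div_two_succ)
    next
      case 3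
      then have "us (i div 2) = vs (j div 2) \<or> us (j div 2) = vs (i div 2)"
        using eq by (cases "even i") auto
      then show ?thesis using disjoint le by blast
    qed
  qed
  then show ?thesis
    by (simp add: interleave_def distinct_map del: upt_Suc)
qed

lemma inj_on_alternating_partners:
  assumes mat: "matching E M" and inj: "inj_on us {..m}"
    and matched_edges: "\<forall>i<m. (us (Suc i), vs i) \<in> M" and "\<not> matched M (vs m)"
  shows "inj_on vs {..m}"
proof (rule inj_onI)
  fix i j assume ij: "i \<in> {..m}" "j \<in> {..m}" and eq: "vs i = vs j"
  show "i = j"
  proof (cases "i < m \<and> j < m")
    case True
    have "(us (Suc i), vs i) = (us (Suc j), vs j)"
      by (rule inj_onD[OF matching_inj_on_snd[OF mat]]) (use True eq matched_edges in auto)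
    then have "us (Suc i) = us (Suc j)" by simp
    then have "Suc i = Suc j" by (rule inj_onD[OF inj]) (use True in auto)
    then show ?thesis by simp
  next
    case False
    have vs_matched: "matched M (vs j)" if "j < m" for j
      using matched_edges that unfolding matched_def by force
    from False have "i = m \<and> j \<le> m \<or> j = m \<and> i \<le> m" using ij by auto
    then show ?thesis
      using eq vs_matched[of i] vs_matched[of j] \<open>\<not> matched M (vs m)\<close> by fastforce
  qed
qed

lemma augmenting_path_interleave:
  assumes bip: "bipartite_graph U V E" and mat: "matching E M"
    and inj: "inj_on us {..m}"
    and unmatched_edges: "\<forall>i\<le>m. (us i, vs i) \<in> E - M"
    and matched_edges: "\<forall>i<m. (us (Suc i), vs i) \<in> M"
    and "\<not> matched M (us 0)" and "\<not> matched M (vs m)"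
  shows "augmenting_path E M (interleave us vs m)"
proof -
  have EUV: "E \<subseteq> U \<times> V" and disj: "U \<inter> V = {}" and ME: "M \<subseteq> E"
    using bip mat by (auto simp: bipartite_graph_def matching_def)
  have us_U: "us ` {..m} \<subseteq> U" and vs_V: "vs ` {..m} \<subseteq> V"
    using unmatched_edges EUV by auto
  have vs_inj: "inj_on vs {..m}"
    using mat inj matched_edges assms(7) by (rule inj_on_alternating_partners)
  have disj': "us ` {..m} \<inter> vs ` {..m} = {}" using us_U vs_V disj by blast
  define p where "p = interleave us vs m"
  have "distinct p" unfolding p_def using inj vs_inj disj' by (rule distinct_interleave)
  have edge: "has_edge E (p ! i) (p ! Suc i) \<and> (has_edge M (p ! i) (p ! Suc i) \<longleftrightarrow> odd i)"
    if i: "i < length p - 1" for i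
  proof (cases "even i")
    case True
    then have "p ! i = us (i div 2)" "p ! Suc i = vs (i div 2)" "i div 2 \<le> m"
      using i by (auto simp: p_def nth_interleave)
    moreover from this have "(vs (i div 2), us (i div 2)) \<notin> M"
      using vs_V ME EUV disj by blast
    ultimately show ?thesis using True unmatched_edges by (auto simp: has_edge_def)
  next
    case False
    then have "i div 2 < m" "Suc i div 2 = Suc (i div 2)" using i by (simp_all add: p_def) presburger+
    moreover from this have "p ! i = vs (i div 2)" "p ! Suc i = us (Suc (i div 2))"
      using i False by (auto simp: p_def nth_interleave)
    ultimately show ?thesis using False matched_edges ME by (auto simp: has_edge_def)
  qed
  then have "\<forall>i < length p - 1. has_edge E (p ! i) (p ! Suc i)"
    and "\<forall>i < length p - 1. has_edge M (p ! i) (p ! Suc i) \<longleftrightarrow> odd i"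
    by blast+
  moreover have "length p \<ge> 2" and "\<not> matched M (hd p)" using assms(6) by (simp_all add: p_def)
  moreover have "\<not> matched M (last p)"
    using assms(7) by (simp add: p_def interleave_def last_map del: upt_Suc)
  ultimately show ?thesis
    unfolding augmenting_path_def p_def[symmetric] using \<open>distinct p\<close> by (simp only: simp_thms)
qed

locale alternating_search =
  fixes U V :: "nat set" and E M :: "(nat \<times> nat) set" and s :: nat
  assumes bipartite: "bipartite_graph U V E"
    and matching: "matching E M"
    and root_in_U: "s \<in> U"
    and root_unmatched: "\<not> matched M s"
begin

lemma finite_U: "finite U" and finite_V: "finite V"
  and edges_UV: "E \<subseteq> U \<times> V" and matching_subset: "M \<subseteq> E"
  using bipartite matching by (auto simp: bipartite_graph_def matching_def)

primrec layer :: "nat \<Rightarrow> nat set" where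
  "layer 0 = {s}"
| "layer (Suc k) = layer k \<union> {u'. \<exists>u\<in>layer k. \<exists>v. (u, v) \<in> E - M \<and> (u', v) \<in> M}"

definition depth :: "nat \<Rightarrow> nat" where
  "depth u = (LEAST k. u \<in> layer k)"

definition has_free_exit :: "nat \<Rightarrow> bool" where
  "has_free_exit k \<longleftrightarrow> (\<exists>u\<in>layer k. \<exists>v. (u, v) \<in> E \<and> \<not> matched M v)"

lemma layer_mono: "j \<le> k \<Longrightarrow> layer j \<subseteq> layer k"
  by (rule lift_Suc_mono_le[of layer]) auto

lemma layer_subset_U: "layer k \<subseteq> U"
  using root_in_U matching_subset edges_UV by (induction k) auto

lemma finite_layer: "finite (layer k)"
  using layer_subset_U finite_U by (rule finite_subset)

lemma depth_le: "u \<in> layer k \<Longrightarrow> depth u \<le> k"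
  unfolding depth_def by (rule Least_le)

lemma in_layer_depth: "u \<in> layer k \<Longrightarrow> u \<in> layer (depth u)"
  unfolding depth_def by (rule LeastI)

lemma alternating_walk_to_layer:
  assumes "u \<in> layer k"
  shows "\<exists>us vs. us 0 = s \<and> us (depth u) = u \<and> (\<forall>i\<le>depth u. depth (us i) = i) \<and>
    (\<forall>i<depth u. (us i, vs i) \<in> E - M \<and> (us (Suc i), vs i) \<in> M)"
  using assms
proof (induction k arbitrary: u)
  case 0
  then have "u = s" "depth s = 0" using depth_le[of s 0] by auto
  then show ?case by auto
next
  case (Suc k)
  show ?case
  proof (cases "u \<in> layer k")
    case True
    then show ?thesis by (rule Suc.IH)
  next
    case False
    then obtain u' v where u': "u' \<in> layer k" "(u', v) \<in> E - M" "(u, v) \<in> M"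
      using Suc.prems by auto
    have depth_u: "depth u = Suc k"
      using False Suc.prems depth_le in_layer_depth layer_mono
      by (metis le_SucE subsetD)
    have depth_u': "depth u' = k"
    proof (rule ccontr)
      assume "depth u' \<noteq> k"
      with depth_le[OF u'(1)] have "Suc (depth u') \<le> k" by simp
      moreover have "u \<in> layer (Suc (depth u'))"
        using in_layer_depth[OF u'(1)] u' by auto
      ultimately show False using False layer_mono by blast
    qed
    obtain us vs where walk: "us 0 = s" "us k = u'" "\<forall>i\<le>k. depth (us i) = i"
      "\<forall>i<k. (us i, vs i) \<in> E - M \<and> (us (Suc i), vs i) \<in> M"
      using Suc.IH[OF u'(1)] depth_u' by auto
    define us' where "us' = us(Suc k := u)"
    define vs' where "vs' = vs(k := v)"
    have "us' 0 = s \<and> us' (Suc k) = u \<and> (\<forall>i\<le>Suc k. depth (us' i) = i) \<and>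
      (\<forall>i<Suc k. (us' i, vs' i) \<in> E - M \<and> (us' (Suc i), vs' i) \<in> M)"
      using walk u' depth_u by (auto simp: us'_def vs'_def le_Suc_eq less_Suc_eq)
    then show ?thesis unfolding depth_u by blast
  qed
qed

lemma augmenting_path_of_free_exit:
  assumes "has_free_exit k"
  shows "\<exists>p. augmenting_path E M p \<and> hd p = s \<and> length p - 1 \<le> 2 * k + 1"
proof -
  obtain u v where u: "u \<in> layer k" and v: "(u, v) \<in> E" "\<not> matched M v"
    using assms unfolding has_free_exit_def by blast
  define m where "m = depth u"
  obtain us vs where walk: "us 0 = s" "us m = u" "\<forall>i\<le>m. depth (us i) = i"
    "\<forall>i<m. (us i, vs i) \<in> E - M \<and> (us (Suc i), vs i) \<in> M"
    using alternating_walk_to_layer[OF u] unfolding m_def by blast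
  have inj: "inj_on us {..m}"
    using walk(3) by (metis atMost_iff inj_onI)
  have "(u, v) \<notin> M" using v(2) unfolding matched_def by force
  then have unmatched: "\<forall>i\<le>m. (us i, (vs(m := v)) i) \<in> E - M"
    and matched: "\<forall>i<m. (us (Suc i), (vs(m := v)) i) \<in> M"
    using walk v by (auto simp: le_less)
  have "augmenting_path E M (interleave us (vs(m := v)) m)"
    by (rule augmenting_path_interleave[OF bipartite matching inj unmatched matched])
      (use root_unmatched walk(1) v(2) in auto)
  moreover have "m \<le> k" unfolding m_def using u by (rule depth_le)
  ultimately show ?thesis using walk(1) by fastforce
qed

definition layer_neighbours :: "nat \<Rightarrow> nat set" where
  "layer_neighbours k = {v. \<exists>u\<in>layer k. (u, v) \<in> E}"

lemma layer_neighbours_subset_V: "layer_neighbours k \<subseteq> V"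
  using edges_UV by (auto simp: layer_neighbours_def)

lemma card_layer_neighbours_le:
  assumes "\<not> has_free_exit k"
  shows "card (layer_neighbours k) \<le> card (layer (Suc k))"
proof -
  define Mk where "Mk = M \<inter> (layer (Suc k) \<times> layer_neighbours k)"
  have "layer_neighbours k \<subseteq> snd ` Mk"
  proof
    fix v assume v: "v \<in> layer_neighbours k"
    then obtain u where u: "u \<in> layer k" "(u, v) \<in> E" by (auto simp: layer_neighbours_def)
    then have "matched M v" using assms by (auto simp: has_free_exit_def)
    then obtain w where w: "(w, v) \<in> M"
      using bipartite_matched_V[OF bipartite matching] v layer_neighbours_subset_V by blast
    have "w \<in> layer (Suc k)"
    proof (cases "(u, v) \<in> M")
      case True
      have "(w, v) = (u, v)"
        by (rule inj_onD[OF matching_inj_on_snd[OF matching]]) (use w True in auto)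
      then show ?thesis using u(1) by simp
    next
      case False
      then show ?thesis using u w by auto
    qed
    then show "v \<in> snd ` Mk" using v w unfolding Mk_def by force
  qed
  moreover have "finite Mk"
    using matching_subset edges_UV finite_U finite_V unfolding Mk_def
    by (meson finite_Int finite_SigmaI finite_subset)
  moreover have "inj_on snd Mk" "inj_on fst Mk"
    using matching_inj_on_snd[OF matching] matching_inj_on_fst[OF matching]
    unfolding Mk_def by (auto intro: inj_on_subset)
  moreover have "fst ` Mk \<subseteq> layer (Suc k)" unfolding Mk_def by (auto simp del: layer.simps)
  ultimately have "card (layer_neighbours k) \<le> card Mk \<and> card Mk \<le> card (layer (Suc k))"
    using finite_layer by (metis card_image card_mono finite_imageI)
  then show ?thesis by linarith
qed

lemma layer_growth:
  assumes degree_U: "\<forall>u\<in>U. d \<le> degree E u" and degree_V: "\<forall>v\<in>V. degree E v \<le> f"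
    and "\<not> has_free_exit k"
  shows "card (layer k) * d \<le> card (layer (Suc k)) * f"
proof -
  let ?N = "layer_neighbours k"
  have finite_N: "finite ?N" using layer_neighbours_subset_V finite_V by (rule finite_subset)
  have "card (layer k) * d = (\<Sum>u\<in>layer k. d)" by simp
  also have "\<dots> \<le> (\<Sum>u\<in>layer k. card {v\<in>?N. (u, v) \<in> E})"
  proof (rule sum_mono)
    fix u assume u: "u \<in> layer k"
    then have "{v\<in>?N. (u, v) \<in> E} = {v. (u, v) \<in> E}" by (auto simp: layer_neighbours_def)
    moreover have "u \<in> U" using u layer_subset_U by blast
    ultimately show "d \<le> card {v\<in>?N. (u, v) \<in> E}"
      using degree_U bipartite_degree_U[OF bipartite] by simp
  qed
  also have "\<dots> = (\<Sum>v\<in>?N. card {u\<in>layer k. (u, v) \<in> E})"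
    using finite_layer finite_N by (rule sum_card_relation_swap)
  also have "\<dots> \<le> (\<Sum>v\<in>?N. f)"
  proof (rule sum_mono)
    fix v assume "v \<in> ?N"
    then have v: "v \<in> V" using layer_neighbours_subset_V by blast
    have "finite {u. (u, v) \<in> E}"
      using finite_U edges_UV by (auto intro: finite_subset)
    then have "card {u\<in>layer k. (u, v) \<in> E} \<le> card {u. (u, v) \<in> E}"
      by (rule card_mono) auto
    also have "\<dots> = degree E v" using bipartite_degree_V[OF bipartite v] by simp
    also have "\<dots> \<le> f" using degree_V v by blast
    finally show "card {u\<in>layer k. (u, v) \<in> E} \<le> f" .
  qed
  also have "\<dots> = card ?N * f" by simp
  also have "\<dots> \<le> card (layer (Suc k)) * f"
    using card_layer_neighbours_le[OF assms(3)] by simp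
  finally show ?thesis .
qed

lemma layer_card_power_bound:
  assumes "\<forall>u\<in>U. d \<le> degree E u" and "\<forall>v\<in>V. degree E v \<le> f"
    and "\<forall>j<k. \<not> has_free_exit j"
  shows "d ^ k \<le> card (layer k) * f ^ k"
  using assms(3)
proof (induction k)
  case 0
  then show ?case by simp
next
  case (Suc k)
  have "d ^ Suc k = d * d ^ k" by simp
  also have "\<dots> \<le> d * (card (layer k) * f ^ k)" using Suc by simp
  also have "\<dots> = card (layer k) * d * f ^ k" by simp
  also have "\<dots> \<le> card (layer (Suc k)) * f * f ^ k"
    using layer_growth[OF assms(1,2)] Suc.prems by simp
  finally show ?case by (simp add: mult.assoc)
qed

lemma short_augmenting_path:
  assumes "\<forall>u\<in>U. d \<le> degree E u" and "\<forall>v\<in>V. degree E v \<le> f" and "f < d"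
  shows "\<exists>p. augmenting_path E M p \<and> hd p = s \<and>
    real (length p - 1) \<le> 2 * real d * ln (real (card U)) + 1"
proof -
  have exit_depth: "real k \<le> real d * ln (real (card U))" if "\<forall>j<k. \<not> has_free_exit j" for k
  proof -
    have "d ^ k \<le> card (layer k) * f ^ k"
      using assms(1,2) that by (rule layer_card_power_bound)
    also have "\<dots> \<le> card U * f ^ k"
      using card_mono[OF finite_U layer_subset_U] by simp
    finally have "real d ^ k \<le> real (card U) * real f ^ k"
      by (metis of_nat_le_iff of_nat_mult of_nat_power)
    with \<open>f < d\<close> show ?thesis by (rule exponent_le_of_power_bound)
  qed
  have "\<exists>k. has_free_exit k"
  proof (rule ccontr)
    assume none: "\<nexists>k. has_free_exit k"
    obtain k where "real d * ln (real (card U)) < real k" using reals_Archimedean2 by blast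
    with exit_depth[of k] none show False by auto
  qed
  then obtain k where k: "has_free_exit k" "\<forall>j<k. \<not> has_free_exit j"
    by (metis exists_least_iff)
  obtain p where p: "augmenting_path E M p" "hd p = s" "length p - 1 \<le> 2 * k + 1"
    using augmenting_path_of_free_exit[OF k(1)] by blast
  from p(3) have "real (length p - 1) \<le> 2 * real k + 1" by linarith
  also have "\<dots> \<le> 2 * real d * ln (real (card U)) + 1" using exit_depth[OF k(2)] by simp
  finally show ?thesis using p(1,2) by blast
qed

end

theorem lemma3p3:
  shows "\<exists>C::real. C > 0 \<and>
    (\<forall>U V E (d::nat) (f::nat) M s.
       bipartite_graph U V E \<and> card U + card V \<ge> 2 \<and>
       (\<forall>u\<in>U. degree E u \<ge> d) \<and> (\<forall>v\<in>V. degree E v \<le> f) \<and> f < d \<and>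
       matching E M \<and> s \<in> U \<and> \<not> matched M s
       \<longrightarrow> (\<exists>p. augmenting_path E M p \<and> hd p = s \<and>
              real (length p - 1) \<le> C * real d * ln (real (card U + card V))))"
proof (intro exI[of _ 4] conjI allI impI)
  fix U V E d f M s
  assume H: "bipartite_graph U V E \<and> card U + card V \<ge> 2 \<and>
    (\<forall>u\<in>U. degree E u \<ge> d) \<and> (\<forall>v\<in>V. degree E v \<le> f) \<and> f < d \<and>
    matching E M \<and> s \<in> U \<and> \<not> matched M s"
  then interpret alternating_search U V E M s by unfold_locales auto
  obtain p where p: "augmenting_path E M p" "hd p = s"
    and length_p: "real (length p - 1) \<le> 2 * real d * ln (real (card U)) + 1"
    using short_augmenting_path H by blast
  have "card U > 0" using finite_U root_in_U card_gt_0_iff by blast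
  then have "2 * real d * ln (real (card U)) + 1 \<le> 4 * real d * ln (real (card U + card V))"
    using H by (intro two_d_ln_plus_one_le) auto
  with p length_p show "\<exists>p. augmenting_path E M p \<and> hd p = s \<and>
    real (length p - 1) \<le> 4 * real d * ln (real (card U + card V))"
    by auto
qed simp

end
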